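(* Let $n\geq 5$, let $S$ be the set of all $3$-cycles in $S_n$, and let $CAG_n=\mathrm{Cay}(A_n,S)$. Let $A_e$ be the set of automorphisms of $CAG_n$ that fix the identity vertex $e$ and each of its neighbours. Then $A_e=\{1\}$.
   Context: For a finite group $\Gamma$ and a subset $T\subseteq\Gamma$ with $e\notin T$ and $T=T^{-1}$, the Cayley graph $\mathrm{Cay}(\Gamma,T)$ is the undirected graph with vertex set $\Gamma$ and edge set $\{\{\gamma,t\gamma\}\mid \gamma\in\Gamma, t\in T\}$. The neighbours of $e$ in $CAG_n$ are exactly the elements of $S$. *)

theory Defs
  imports "HOL-Combinatorics.Combinatorics"
begin

text \<open>Permutations of {0..<n} represented as functions nat => nat; group product is composition.\<close>

definition alt_grp :: "nat \<Rightarrow> (nat \<Rightarrow> nat) set" where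
  "alt_grp n = {p. p permutes {..<n} \<and> evenperm p}"

definition three_cycles :: "nat \<Rightarrow> (nat \<Rightarrow> nat) set" where
  "three_cycles n = {cycle_of_list [a, b, c] | a b c.
      distinct [a, b, c] \<and> a < n \<and> b < n \<and> c < n}"

definition cag_adj :: "nat \<Rightarrow> (nat \<Rightarrow> nat) \<Rightarrow> (nat \<Rightarrow> nat) \<Rightarrow> bool" where
  "cag_adj n x y \<longleftrightarrow> x \<in> alt_grp n \<and> y \<in> alt_grp n \<and>
     (\<exists>t\<in>three_cycles n. y = t \<circ> x \<or> x = t \<circ> y)"

definition cag_aut :: "nat \<Rightarrow> ((nat \<Rightarrow> nat) \<Rightarrow> (nat \<Rightarrow> nat)) \<Rightarrow> bool" where
  "cag_aut n f \<longleftrightarrow> bij_betw f (alt_grp n) (alt_grp n) \<and>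
     (\<forall>x\<in>alt_grp n. \<forall>y\<in>alt_grp n. cag_adj n x y \<longleftrightarrow> cag_adj n (f x) (f y))"

end

theory Submission
  imports Defs
begin

text \<open>Since \<open>t \<circ> x\<close> and \<open>x\<close> differ exactly at the three points moved by the 3-cycle \<open>t\<close>,
  adjacency in \<open>CAG\<^sub>n\<close> is Hamming distance 3 between permutations, and automorphisms preserve it.
  Let \<open>h\<close> fix \<open>e\<close> and all 3-cycles. If \<open>z\<close> is at distance 3 from fixed vertices
  \<open>w\<^sub>1, \<dots>, w\<^sub>k\<close> supported on a set \<open>P\<close>, so is \<open>h z\<close>; counting disagreements point by
  point, the lower bounds over \<open>P\<close> already exhaust the total \<open>3k\<close>, which confines \<open>h z\<close> to
  \<open>P\<close> and nearly determines it there. With suitable witnesses this shows that \<open>h\<close> fixes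
  5-cycles, double transpositions and products of two disjoint 3-cycles, hence every product of two
  3-cycles. Right translations are automorphisms, so conjugating by them propagates the fixed
  neighbourhood along products of 3-cycles, and these exhaust \<open>A\<^sub>n\<close>.\<close>

definition cycle3 :: "nat \<Rightarrow> nat \<Rightarrow> nat \<Rightarrow> nat \<Rightarrow> nat" where
  "cycle3 a b c = (\<lambda>i. if i = a then b else if i = b then c else if i = c then a else i)"

lemma cycle_of_list_cycle3: "distinct [a, b, c] \<Longrightarrow> cycle_of_list [a, b, c] = cycle3 a b c"
  by (auto simp: cycle3_def Transposition.transpose_def fun_eq_iff)

lemma cycle3_rotate: "distinct [a, b, c] \<Longrightarrow> cycle3 a b c = cycle3 b c a"
  by (auto simp: cycle3_def fun_eq_iff)

lemma cycle3_moved_points: "distinct [a, b, c] \<Longrightarrow> {i. cycle3 a b c i \<noteq> i} = {a, b, c}"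
  by (auto simp: cycle3_def)

lemma cycle3_in_three_cycles:
  "\<lbrakk>distinct [a, b, c]; a < n; b < n; c < n\<rbrakk> \<Longrightarrow> cycle3 a b c \<in> three_cycles n"
  unfolding three_cycles_def by (metis (mono_tags, lifting) cycle_of_list_cycle3 mem_Collect_eq)

lemma three_cyclesE:
  assumes "t \<in> three_cycles n"
  obtains a b c where "distinct [a, b, c]" "a < n" "b < n" "c < n" "t = cycle3 a b c"
  using assms cycle_of_list_cycle3 unfolding three_cycles_def by blast

lemma cycle3_in_alt_grp:
  assumes "distinct [a, b, c]" "a < n" "b < n" "c < n"
  shows "cycle3 a b c \<in> alt_grp n"
proof -
  have "cycle3 a b c = transpose a b \<circ> transpose b c"
    using assms(1) by (auto simp: cycle3_def Transposition.transpose_def fun_eq_iff)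
  then have "evenperm (cycle3 a b c)"
    using assms(1) by (simp add: evenperm_comp evenperm_swap permutation_swap_id)
  moreover have "cycle3 a b c permutes {..<n}"
    using assms cycle_permutes[of "[a, b, c]"] permutes_subset
    by (metis cycle_of_list_cycle3 empty_subsetI insert_subset lessThan_iff list.set(1,2))
  ultimately show ?thesis
    unfolding alt_grp_def by blast
qed

lemma three_cycles_subset_alt_grp: "three_cycles n \<subseteq> alt_grp n"
  using cycle3_in_alt_grp by (blast elim: three_cyclesE)

lemma permutes_moving_three_points:
  assumes p: "p permutes U" and card: "card {i. p i \<noteq> i} = 3"
  obtains a b c where "distinct [a, b, c]" "{a, b, c} = {i. p i \<noteq> i}" "p = cycle3 a b c"
proof -
  obtain x y z where M: "{i. p i \<noteq> i} = {x, y, z}" and d: "x \<noteq> y" "x \<noteq> z" "y \<noteq> z"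
    using card card_3_iff by metis
  have inj: "p u = p v \<Longrightarrow> u = v" for u v
    using p by (metis permutes_inj injD)
  have fixed: "p u = u" if "u \<notin> {x, y, z}" for u
    using that M by blast
  have moved: "p u \<noteq> u" "p u \<in> {x, y, z}" if "u \<in> {x, y, z}" for u
  proof -
    show "p u \<noteq> u" using that M by blast
    then have "p (p u) \<noteq> p u" using inj by metis
    then show "p u \<in> {x, y, z}" using M by blast
  qed
  have "p = cycle3 x y z \<or> p = cycle3 x z y"
  proof (cases "p x = y")
    case True
    then have "p y = z" "p z = x"
      using moved[of y] moved[of z] inj[of z x] inj[of y x] inj[of z y] d by auto
    then show ?thesis using True fixed by (auto simp: cycle3_def fun_eq_iff)
  next
    case False
    then have "p x = z" "p z = y" "p y = x"
      using moved[of x] moved[of y] moved[of z] inj[of z x] inj[of y x] inj[of z y] d by auto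
    then show ?thesis using fixed by (auto simp: cycle3_def fun_eq_iff)
  qed
  moreover have "{x, z, y} = {x, y, z}"
    by blast
  ultimately show ?thesis
    using that[of x y z] that[of x z y] M d by auto
qed

lemma alt_grp_permutes: "x \<in> alt_grp n \<Longrightarrow> x permutes {..<n}"
  unfolding alt_grp_def by blast

lemma alt_grp_bij: "x \<in> alt_grp n \<Longrightarrow> bij x"
  using alt_grp_permutes permutes_bij by blast

lemma id_in_alt_grp: "id \<in> alt_grp n"
  unfolding alt_grp_def by (simp add: permutes_id)

lemma alt_grp_comp:
  assumes "x \<in> alt_grp n" "y \<in> alt_grp n"
  shows "x \<circ> y \<in> alt_grp n"
proof -
  have "x permutes {..<n}" "y permutes {..<n}" "evenperm x" "evenperm y"
    using assms unfolding alt_grp_def by auto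
  moreover from this have "permutation x" "permutation y"
    using permutation_permutes by blast+
  ultimately show ?thesis
    unfolding alt_grp_def by (simp add: permutes_compose evenperm_comp)
qed

lemma alt_grp_inv:
  assumes "x \<in> alt_grp n"
  shows "inv x \<in> alt_grp n"
proof -
  have "x permutes {..<n}" "evenperm x"
    using assms unfolding alt_grp_def by auto
  moreover from this have "permutation x"
    using permutation_permutes by blast
  ultimately show ?thesis
    unfolding alt_grp_def by (simp add: permutes_inv evenperm_inv)
qed

lemma alt_grp_comp_inv: "g \<in> alt_grp n \<Longrightarrow> g \<circ> inv g = id"
  using alt_grp_permutes permutes_inv_o(1) by blast

lemma alt_grp_inv_comp: "g \<in> alt_grp n \<Longrightarrow> inv g \<circ> g = id"
  using alt_grp_permutes permutes_inv_o(2) by blast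

lemma alt_grp_moved_points: "x \<in> alt_grp n \<Longrightarrow> {i. x i \<noteq> i} \<subseteq> {..<n}"
  using alt_grp_permutes permutes_not_in by fastforce

lemma alt_grp_finite_support: "x \<in> alt_grp n \<Longrightarrow> finite {i. x i \<noteq> i}"
  using alt_grp_moved_points finite_subset by blast

section \<open>Adjacency as Hamming distance\<close>

definition hamming_dist :: "(nat \<Rightarrow> nat) \<Rightarrow> (nat \<Rightarrow> nat) \<Rightarrow> nat" where
  "hamming_dist x y = card {i. x i \<noteq> y i}"

lemma hamming_dist_commute: "hamming_dist x y = hamming_dist y x"
  unfolding hamming_dist_def by (simp add: eq_commute)

lemma hamming_dist_comp_left:
  assumes "bij x"
  shows "hamming_dist (t \<circ> x) x = card {j. t j \<noteq> j}"
proof -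
  have "{i. (t \<circ> x) i \<noteq> x i} = inv x ` {j. t j \<noteq> j}"
    using assms by (auto simp: bij_inv_eq_iff image_iff) (metis bij_inv_eq_iff)
  moreover have "inj (inv x)"
    using assms bij_imp_bij_inv bij_is_inj by blast
  ultimately show ?thesis
    unfolding hamming_dist_def by (simp add: card_image inj_on_subset)
qed

lemma cag_adj_iff_hamming_dist:
  "cag_adj n x y \<longleftrightarrow> x \<in> alt_grp n \<and> y \<in> alt_grp n \<and> hamming_dist x y = 3"
proof
  assume "cag_adj n x y"
  then obtain t where t: "t \<in> three_cycles n" "y = t \<circ> x \<or> x = t \<circ> y"
    and xy: "x \<in> alt_grp n" "y \<in> alt_grp n"
    unfolding cag_adj_def by blast
  have "card {j. t j \<noteq> j} = 3"
    using t(1) by (elim three_cyclesE) (simp add: cycle3_moved_points)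
  then show "x \<in> alt_grp n \<and> y \<in> alt_grp n \<and> hamming_dist x y = 3"
    using t(2) xy hamming_dist_comp_left[OF alt_grp_bij, of _ n t] hamming_dist_commute by auto
next
  assume xy: "x \<in> alt_grp n \<and> y \<in> alt_grp n \<and> hamming_dist x y = 3"
  define t where "t = y \<circ> inv x"
  have y: "y = t \<circ> x"
    unfolding t_def using xy alt_grp_inv_comp[of x n] by (simp add: comp_assoc)
  have t_perm: "t permutes {..<n}"
    unfolding t_def using xy by (simp add: alt_grp_permutes alt_grp_comp alt_grp_inv)
  have "card {j. t j \<noteq> j} = hamming_dist y x"
    using hamming_dist_comp_left[OF alt_grp_bij, of x n t] xy y by simp
  then have "card {j. t j \<noteq> j} = 3"
    using xy hamming_dist_commute by simp
  then obtain a b c where abc: "distinct [a, b, c]" "{a, b, c} = {i. t i \<noteq> i}" "t = cycle3 a b c"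
    using permutes_moving_three_points[OF t_perm] by blast
  have "{i. t i \<noteq> i} \<subseteq> {..<n}"
    using permutes_not_in[OF t_perm] by fastforce
  then have "a < n" "b < n" "c < n"
    using abc(2) by auto
  then have "t \<in> three_cycles n"
    using abc by (simp add: cycle3_in_three_cycles)
  then show "cag_adj n x y"
    unfolding cag_adj_def using xy y by blast
qed

lemma cag_adj_id_three_cycle: "t \<in> three_cycles n \<Longrightarrow> cag_adj n id t"
  using id_in_alt_grp three_cycles_subset_alt_grp unfolding cag_adj_def by fastforce

lemma sum_list_sum_swap: "(\<Sum>w\<leftarrow>W. \<Sum>p\<in>P. f w p) = (\<Sum>p\<in>P. \<Sum>w\<leftarrow>W. f w p)"
  by (induction W) (auto simp: sum.distrib)

lemma hamming_dist_split:
  assumes "finite P" "\<forall>i. i \<notin> P \<longrightarrow> w i = i" "finite {i. g i \<noteq> i}"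
  shows "hamming_dist g w = (\<Sum>p\<in>P. of_bool (g p \<noteq> w p)) + card {i. i \<notin> P \<and> g i \<noteq> i}"
proof -
  have "{i. g i \<noteq> w i} = {p\<in>P. g p \<noteq> w p} \<union> {i. i \<notin> P \<and> g i \<noteq> i}"
    using assms(2) by auto
  moreover have "card ({p\<in>P. g p \<noteq> w p} \<union> {i. i \<notin> P \<and> g i \<noteq> i}) =
      card {p\<in>P. g p \<noteq> w p} + card {i. i \<notin> P \<and> g i \<noteq> i}"
    using assms(1,3) by (intro card_Un_disjoint) auto
  ultimately have "hamming_dist g w = card {p\<in>P. g p \<noteq> w p} + card {i. i \<notin> P \<and> g i \<noteq> i}"
    unfolding hamming_dist_def by simp
  then show ?thesis
    using assms(1) by (simp add: Int_def)
qed

lemma hamming_dist_supported: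
  assumes "finite P" "\<forall>i. i \<notin> P \<longrightarrow> w i = i" "\<forall>i. i \<notin> P \<longrightarrow> z i = i"
  shows "hamming_dist z w = (\<Sum>p\<in>P. of_bool (z p \<noteq> w p))"
proof -
  have "{i. z i \<noteq> i} \<subseteq> P"
    using assms(3) by blast
  then have "finite {i. z i \<noteq> i}"
    using assms(1) by (rule finite_subset)
  moreover have "{i. i \<notin> P \<and> z i \<noteq> i} = {}"
    using assms(3) by auto
  ultimately show ?thesis
    using hamming_dist_split[OF assms(1,2)] by simp
qed

text \<open>Double counting: the distances from \<open>g\<close> to the witnesses add up to the disagreement
  counts over \<open>P\<close> plus \<open>|W|\<close> times the number of points outside \<open>P\<close> moved by \<open>g\<close>; if the
  lower bounds \<open>m\<close> already exhaust the total, all of these estimates are sharp.\<close>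
lemma hamming_dist_pinned:
  fixes g :: "nat \<Rightarrow> nat" and W :: "(nat \<Rightarrow> nat) list" and m :: "nat \<Rightarrow> nat"
  assumes P: "finite P" and g: "finite {i. g i \<noteq> i}" and "W \<noteq> []"
    and W: "\<forall>w\<in>set W. (\<forall>i. i \<notin> P \<longrightarrow> w i = i) \<and> hamming_dist g w = d"
    and low: "\<forall>p\<in>P. m p \<le> (\<Sum>w\<leftarrow>W. of_bool (g p \<noteq> w p))"
    and sum_m: "sum m P = d * length W"
  shows "(\<forall>i. i \<notin> P \<longrightarrow> g i = i) \<and> (\<forall>p\<in>P. (\<Sum>w\<leftarrow>W. of_bool (g p \<noteq> w p)) = m p)"
proof -
  define k where "k = card {i. i \<notin> P \<and> g i \<noteq> i}"
  define c where "c p = (\<Sum>w\<leftarrow>W. of_bool (g p \<noteq> w p) :: nat)" for p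
  have "(\<Sum>w\<leftarrow>W. hamming_dist g w) = d * length W"
    using W by (induction W) auto
  moreover have "(\<Sum>w\<leftarrow>W. hamming_dist g w) = (\<Sum>w\<leftarrow>W. (\<Sum>p\<in>P. of_bool (g p \<noteq> w p)) + k)"
    using hamming_dist_split[OF P _ g] W unfolding k_def by (intro arg_cong[where f = sum_list] map_cong) auto
  moreover have "(\<Sum>w\<leftarrow>W. (\<Sum>p\<in>P. of_bool (g p \<noteq> w p)) + k) = sum c P + k * length W"
    unfolding c_def by (simp only: sum_list_addf sum_list_sum_swap sum_list_triv) simp
  ultimately have "sum c P + k * length W = sum m P"
    using sum_m by simp
  moreover have "sum m P \<le> sum c P"
    using low unfolding c_def by (simp add: sum_mono)
  ultimately have "k * length W = 0" and c_m: "sum c P = sum m P"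
    by linarith+
  then have "k = 0"
    using \<open>W \<noteq> []\<close> by simp
  moreover have "finite {i. i \<notin> P \<and> g i \<noteq> i}"
    using g by (rule finite_subset[rotated]) blast
  ultimately have "\<forall>i. i \<notin> P \<longrightarrow> g i = i"
    unfolding k_def by auto
  moreover have "\<forall>p\<in>P. c p = m p"
  proof (rule ccontr)
    assume "\<not> (\<forall>p\<in>P. c p = m p)"
    then obtain p where "p \<in> P" "m p < c p"
      using low unfolding c_def by force
    then have "sum m P < sum c P"
      using sum_strict_mono_ex1[OF P, of m c] low unfolding c_def by blast
    then show False
      using c_m by simp
  qed
  ultimately show ?thesis
    unfolding c_def by simp
qed

lemma eq_if_agree_on_support:
  assumes "\<forall>i. i \<notin> P \<longrightarrow> f i = i" "\<forall>i. i \<notin> P \<longrightarrow> g i = i" "\<forall>p\<in>P. f p = g p"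
  shows "f = g"
proof
  fix i
  show "f i = g i"
    using assms by (cases "i \<in> P") auto
qed

lemma inj_cycle3_cases:
  assumes "inj g" "distinct [a, b, c]" "g a \<in> {a, b}" "g b \<in> {b, c}" "g c \<in> {c, a}"
  shows "(g a = a \<and> g b = b \<and> g c = c) \<or> (g a = b \<and> g b = c \<and> g c = a)"
  using assms by (cases "g a = a") (auto dest: injD)

lemma inj_between_id_and_cycle5:
  assumes "inj g" "distinct [a, b, c, d, e]" and z: "z = cycle3 a b c \<circ> cycle3 c d e"
    and supp: "\<forall>i. i \<notin> {a, b, c, d, e} \<longrightarrow> g i = i"
    and between: "\<forall>p\<in>{a, b, c, d, e}. g p \<in> {p, z p}"
  shows "g = id \<or> g = z"
proof -
  have neq: "a \<noteq> b" "a \<noteq> c" "a \<noteq> d" "a \<noteq> e" "b \<noteq> c" "b \<noteq> d" "b \<noteq> e" "c \<noteq> d" "c \<noteq> e" "d \<noteq> e"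
    "b \<noteq> a" "c \<noteq> a" "d \<noteq> a" "e \<noteq> a" "c \<noteq> b" "d \<noteq> b" "e \<noteq> b" "d \<noteq> c" "e \<noteq> c" "e \<noteq> d"
    using assms(2) by auto
  have "g a \<in> {a, b}" "g b \<in> {b, c}" "g c \<in> {c, d}" "g d \<in> {d, e}" "g e \<in> {e, a}"
    using between neq by (simp_all add: z cycle3_def)
  then have "(g a = a \<and> g b = b \<and> g c = c \<and> g d = d \<and> g e = e) \<or>
      (g a = b \<and> g b = c \<and> g c = d \<and> g d = e \<and> g e = a)"
    using \<open>inj g\<close> neq by (cases "g a = a") (auto dest: injD)
  then show ?thesis
  proof (elim disjE conjE)
    assume "g a = a" "g b = b" "g c = c" "g d = d" "g e = e"
    then have "g = id"
      by (intro eq_if_agree_on_support[OF supp]) auto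
    then show ?thesis ..
  next
    assume "g a = b" "g b = c" "g c = d" "g d = e" "g e = a"
    then have "g = z"
      by (intro eq_if_agree_on_support[OF supp]) (auto simp: z cycle3_def neq)
    then show ?thesis ..
  qed
qed

lemma inj_between_id_and_disjoint_cycle3:
  assumes "inj g" "distinct [a, b, c, d, e, f]" and z: "z = cycle3 a b c \<circ> cycle3 d e f"
    and supp: "\<forall>i. i \<notin> {a, b, c, d, e, f} \<longrightarrow> g i = i"
    and between: "\<forall>p\<in>{a, b, c, d, e, f}. g p \<in> {p, z p}"
  shows "g \<in> {id, cycle3 a b c, cycle3 d e f, z}"
proof -
  have neq: "a \<noteq> b" "a \<noteq> c" "a \<noteq> d" "a \<noteq> e" "a \<noteq> f" "b \<noteq> c" "b \<noteq> d" "b \<noteq> e" "b \<noteq> f"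
    "c \<noteq> d" "c \<noteq> e" "c \<noteq> f" "d \<noteq> e" "d \<noteq> f" "e \<noteq> f"
    "b \<noteq> a" "c \<noteq> a" "d \<noteq> a" "e \<noteq> a" "f \<noteq> a" "c \<noteq> b" "d \<noteq> b" "e \<noteq> b" "f \<noteq> b"
    "d \<noteq> c" "e \<noteq> c" "f \<noteq> c" "e \<noteq> d" "f \<noteq> d" "f \<noteq> e"
    using assms(2) by auto
  have "g a \<in> {a, b}" "g b \<in> {b, c}" "g c \<in> {c, a}" "g d \<in> {d, e}" "g e \<in> {e, f}" "g f \<in> {f, d}"
    using between neq by (simp_all add: z cycle3_def)
  then have "(g a = a \<and> g b = b \<and> g c = c) \<or> (g a = b \<and> g b = c \<and> g c = a)"
    and "(g d = d \<and> g e = e \<and> g f = f) \<or> (g d = e \<and> g e = f \<and> g f = d)"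
    using inj_cycle3_cases[OF \<open>inj g\<close>, of a b c] inj_cycle3_cases[OF \<open>inj g\<close>, of d e f] neq
    by simp_all
  then show ?thesis
  proof (elim disjE conjE)
    assume "g a = a" "g b = b" "g c = c" "g d = d" "g e = e" "g f = f"
    then have "g = id"
      by (intro eq_if_agree_on_support[OF supp]) auto
    then show ?thesis by simp
  next
    assume "g a = b" "g b = c" "g c = a" "g d = d" "g e = e" "g f = f"
    then have "g = cycle3 a b c"
      by (intro eq_if_agree_on_support[OF supp]) (auto simp: cycle3_def neq)
    then show ?thesis by simp
  next
    assume "g a = a" "g b = b" "g c = c" "g d = e" "g e = f" "g f = d"
    then have "g = cycle3 d e f"
      by (intro eq_if_agree_on_support[OF supp]) (auto simp: cycle3_def neq)
    then show ?thesis by simp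
  next
    assume "g a = b" "g b = c" "g c = a" "g d = e" "g e = f" "g f = d"
    then have "g = z"
      by (intro eq_if_agree_on_support[OF supp]) (auto simp: z cycle3_def neq)
    then show ?thesis by simp
  qed
qed

section \<open>Automorphisms fixing the unit ball\<close>

lemma cag_aut_maps_alt_grp: "\<lbrakk>cag_aut n h; x \<in> alt_grp n\<rbrakk> \<Longrightarrow> h x \<in> alt_grp n"
  unfolding cag_aut_def using bij_betwE by blast

lemma cag_aut_inj: "\<lbrakk>cag_aut n h; x \<in> alt_grp n; y \<in> alt_grp n; h x = h y\<rbrakk> \<Longrightarrow> x = y"
  unfolding cag_aut_def by (meson bij_betw_imp_inj_on inj_onD)

lemma cag_aut_hamming_dist_3:
  assumes "cag_aut n h" "x \<in> alt_grp n" "y \<in> alt_grp n" "hamming_dist x y = 3"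
  shows "hamming_dist (h x) (h y) = 3"
  using assms cag_adj_iff_hamming_dist unfolding cag_aut_def by blast

definition fixes_unit_ball :: "nat \<Rightarrow> ((nat \<Rightarrow> nat) \<Rightarrow> (nat \<Rightarrow> nat)) \<Rightarrow> bool" where
  "fixes_unit_ball n h \<longleftrightarrow> cag_aut n h \<and> h id = id \<and> (\<forall>w\<in>three_cycles n. h w = w)"

lemma fixes_unit_ball_cycle3:
  "\<lbrakk>fixes_unit_ball n h; distinct [a, b, c]; a < n; b < n; c < n\<rbrakk> \<Longrightarrow> h (cycle3 a b c) = cycle3 a b c"
  unfolding fixes_unit_ball_def using cycle3_in_three_cycles by blast

lemma cag_aut_pinned:
  assumes h: "cag_aut n h" and z: "z \<in> alt_grp n" and P: "finite P" and "W \<noteq> []"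
    and W: "\<forall>w\<in>set W. w \<in> alt_grp n \<and> h w = w \<and> (\<forall>i. i \<notin> P \<longrightarrow> w i = i) \<and> hamming_dist z w = 3"
    and low: "\<forall>p\<in>P. \<forall>v. m p \<le> (\<Sum>w\<leftarrow>W. of_bool (v \<noteq> w p))"
    and sum_m: "sum m P = 3 * length W"
  shows "\<forall>i. i \<notin> P \<longrightarrow> h z i = i" and "\<forall>p\<in>P. (\<Sum>w\<leftarrow>W. of_bool (h z p \<noteq> w p)) = m p"
proof -
  have "finite {i. h z i \<noteq> i}"
    using alt_grp_finite_support cag_aut_maps_alt_grp[OF h z] by blast
  moreover have "\<forall>w\<in>set W. (\<forall>i. i \<notin> P \<longrightarrow> w i = i) \<and> hamming_dist (h z) w = 3"
    using W cag_aut_hamming_dist_3[OF h z] by metis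
  moreover have "\<forall>p\<in>P. m p \<le> (\<Sum>w\<leftarrow>W. of_bool (h z p \<noteq> w p))"
    using low by blast
  ultimately have "(\<forall>i. i \<notin> P \<longrightarrow> h z i = i) \<and> (\<forall>p\<in>P. (\<Sum>w\<leftarrow>W. of_bool (h z p \<noteq> w p)) = m p)"
    using hamming_dist_pinned[OF P _ \<open>W \<noteq> []\<close> _ _ sum_m] by blast
  then show "\<forall>i. i \<notin> P \<longrightarrow> h z i = i" "\<forall>p\<in>P. (\<Sum>w\<leftarrow>W. of_bool (h z p \<noteq> w p)) = m p"
    by blast+
qed

lemma fixes_unit_ball_cycle5_pinned:
  assumes h: "fixes_unit_ball n h" and d: "distinct [a, b, c, d, e]"
    and lt: "a < n" "b < n" "c < n" "d < n" "e < n"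
  defines "z \<equiv> cycle3 a b c \<circ> cycle3 c d e"
  shows "\<forall>i. i \<notin> {a, b, c, d, e} \<longrightarrow> h z i = i" and "\<forall>p\<in>{a, b, c, d, e}. h z p \<in> {p, z p}"
proof -
  have neq: "a \<noteq> b" "a \<noteq> c" "a \<noteq> d" "a \<noteq> e" "b \<noteq> c" "b \<noteq> d" "b \<noteq> e" "c \<noteq> d" "c \<noteq> e" "d \<noteq> e"
    "b \<noteq> a" "c \<noteq> a" "d \<noteq> a" "e \<noteq> a" "c \<noteq> b" "d \<noteq> b" "e \<noteq> b" "d \<noteq> c" "e \<noteq> c" "e \<noteq> d"
    using d by auto
  let ?P = "{a, b, c, d, e}"
  let ?W = "[cycle3 a b c, cycle3 b c d, cycle3 c d e, cycle3 d e a, cycle3 e a b]"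
  have aut: "cag_aut n h"
    using h unfolding fixes_unit_ball_def by blast
  have z: "z \<in> alt_grp n"
    unfolding z_def using alt_grp_comp cycle3_in_alt_grp neq lt by simp
  have W: "\<forall>w\<in>set ?W. w \<in> alt_grp n \<and> h w = w \<and> (\<forall>i. i \<notin> ?P \<longrightarrow> w i = i) \<and> hamming_dist z w = 3"
    unfolding z_def using fixes_unit_ball_cycle3[OF h] cycle3_in_alt_grp neq lt
      hamming_dist_supported[of ?P _ "cycle3 a b c \<circ> cycle3 c d e"]
    by (auto simp: cycle3_def simp del: sum_of_bool_eq)
  have low: "\<forall>p\<in>?P. \<forall>v. (3::nat) \<le> (\<Sum>w\<leftarrow>?W. of_bool (v \<noteq> w p))"
    by (auto simp: cycle3_def neq)
  have sum: "(\<Sum>p\<in>?P. 3) = (3::nat) * length ?W"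
    using d by simp
  have "finite ?P" "?W \<noteq> []"
    by simp_all
  note pinned = cag_aut_pinned[OF aut z this W low sum]
  show "\<forall>i. i \<notin> ?P \<longrightarrow> h z i = i"
    using pinned(1) .
  show "\<forall>p\<in>?P. h z p \<in> {p, z p}"
  proof
    fix p
    assume p: "p \<in> ?P"
    have "(\<Sum>w\<leftarrow>?W. of_bool (h z p \<noteq> w p)) = (3::nat)"
      using pinned(2) p by (rule bspec)
    then show "h z p \<in> {p, z p}"
      using p by (auto simp: z_def cycle3_def neq of_bool_def split: if_splits)
  qed
qed

lemma fixes_unit_ball_cycle5:
  assumes h: "fixes_unit_ball n h" and d: "distinct [a, b, c, d, e]"
    and lt: "a < n" "b < n" "c < n" "d < n" "e < n"
  shows "h (cycle3 a b c \<circ> cycle3 c d e) = cycle3 a b c \<circ> cycle3 c d e" (is "h ?z = ?z")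
proof -
  have aut: "cag_aut n h" and "h id = id"
    using h unfolding fixes_unit_ball_def by blast+
  have z: "?z \<in> alt_grp n"
    using alt_grp_comp cycle3_in_alt_grp d lt by simp
  have "inj (h ?z)"
    using alt_grp_bij[THEN bij_is_inj] cag_aut_maps_alt_grp[OF aut z] by blast
  then have "h ?z = id \<or> h ?z = ?z"
    using inj_between_id_and_cycle5[OF _ d refl] fixes_unit_ball_cycle5_pinned[OF h d lt] by blast
  moreover have "?z a \<noteq> id a"
    using d by (auto simp: cycle3_def)
  then have "?z \<noteq> id"
    by metis
  then have "h ?z \<noteq> id"
    using cag_aut_inj[OF aut z id_in_alt_grp] \<open>h id = id\<close> by metis
  ultimately show ?thesis
    by blast
qed

lemma fixes_unit_ball_double_transposition_pinned:
  assumes h: "fixes_unit_ball n h" and d: "distinct [a, b, c, d, x]"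
    and lt: "a < n" "b < n" "c < n" "d < n" "x < n"
  defines "z \<equiv> transpose a b \<circ> transpose c d"
  shows "\<forall>i. i \<notin> {a, b, c, d, x} \<longrightarrow> h z i = i" and "\<forall>p\<in>{a, b, c, d, x}. h z p = z p"
proof -
  have neq: "a \<noteq> b" "a \<noteq> c" "a \<noteq> d" "a \<noteq> x" "b \<noteq> c" "b \<noteq> d" "b \<noteq> x" "c \<noteq> d" "c \<noteq> x" "d \<noteq> x"
    "b \<noteq> a" "c \<noteq> a" "d \<noteq> a" "x \<noteq> a" "c \<noteq> b" "d \<noteq> b" "x \<noteq> b" "d \<noteq> c" "x \<noteq> c" "x \<noteq> d"
    using d by auto
  let ?P = "{a, b, c, d, x}"
  let ?W = "[cycle3 b c d, cycle3 a b c, cycle3 a b d,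
    cycle3 a c d \<circ> cycle3 d x b, cycle3 a d c \<circ> cycle3 c x b, cycle3 a x d \<circ> cycle3 d c b]"
  \<comment> \<open>at \<open>b\<close> and \<open>x\<close> no value is shared by more than three witnesses, elsewhere by more than two\<close>
  define m where "m p = (if p = b \<or> p = x then 3 else 4 :: nat)" for p
  have aut: "cag_aut n h"
    using h unfolding fixes_unit_ball_def by blast
  have "z = cycle3 a b c \<circ> cycle3 b c d"
    unfolding z_def using neq by (auto simp: cycle3_def Transposition.transpose_def fun_eq_iff)
  then have z: "z \<in> alt_grp n"
    using alt_grp_comp cycle3_in_alt_grp neq lt by simp
  have cycle5: "h (cycle3 a c d \<circ> cycle3 d x b) = cycle3 a c d \<circ> cycle3 d x b"
    "h (cycle3 a d c \<circ> cycle3 c x b) = cycle3 a d c \<circ> cycle3 c x b"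
    "h (cycle3 a x d \<circ> cycle3 d c b) = cycle3 a x d \<circ> cycle3 d c b"
    using fixes_unit_ball_cycle5[OF h] neq lt by simp_all
  have W: "\<forall>w\<in>set ?W. w \<in> alt_grp n \<and> h w = w \<and> (\<forall>i. i \<notin> ?P \<longrightarrow> w i = i) \<and> hamming_dist z w = 3"
    unfolding z_def using fixes_unit_ball_cycle3[OF h] cycle3_in_alt_grp alt_grp_comp cycle5 neq lt
      hamming_dist_supported[of ?P _ "transpose a b \<circ> transpose c d"]
    by (auto simp: cycle3_def Transposition.transpose_def simp del: sum_of_bool_eq)
  have low: "\<forall>p\<in>?P. \<forall>v. m p \<le> (\<Sum>w\<leftarrow>?W. of_bool (v \<noteq> w p))"
    by (auto simp: m_def cycle3_def neq)
  have sum: "sum m ?P = 3 * length ?W"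
    unfolding m_def using neq by simp
  have "finite ?P" "?W \<noteq> []"
    by simp_all
  note pinned = cag_aut_pinned[OF aut z this W low sum]
  show "\<forall>i. i \<notin> ?P \<longrightarrow> h z i = i"
    using pinned(1) .
  show "\<forall>p\<in>?P. h z p = z p"
  proof
    fix p
    assume p: "p \<in> ?P"
    have "(\<Sum>w\<leftarrow>?W. of_bool (h z p \<noteq> w p)) = m p"
      using pinned(2) p by (rule bspec)
    then show "h z p = z p"
      using p by (auto simp: z_def m_def cycle3_def Transposition.transpose_def neq of_bool_def split: if_splits)
  qed
qed

lemma ex_less_notin: "\<lbrakk>finite A; card A < n\<rbrakk> \<Longrightarrow> \<exists>x<n. x \<notin> A"
  using card_mono[of A "{..<n}"] by fastforce

lemma fixes_unit_ball_double_transposition: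
  assumes h: "fixes_unit_ball n h" and "5 \<le> n" and d: "distinct [a, b, c, d]"
    and lt: "a < n" "b < n" "c < n" "d < n"
  shows "h (transpose a b \<circ> transpose c d) = transpose a b \<circ> transpose c d"
proof -
  have "card {a, b, c, d} < n"
    using \<open>5 \<le> n\<close> d by simp
  then obtain x where x: "x < n" "x \<notin> {a, b, c, d}"
    using ex_less_notin[of "{a, b, c, d}"] by auto
  then have d': "distinct [a, b, c, d, x]"
    using d by auto
  have "\<forall>i. i \<notin> {a, b, c, d, x} \<longrightarrow> (transpose a b \<circ> transpose c d) i = i"
    by (simp add: Transposition.transpose_def)
  then show ?thesis
    using eq_if_agree_on_support fixes_unit_ball_double_transposition_pinned[OF h d' lt x(1)] by blast
qed

lemma fixes_unit_ball_disjoint_cycle3_pinned: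
  assumes h: "fixes_unit_ball n h" and d: "distinct [a, b, c, d, e, f]"
    and lt: "a < n" "b < n" "c < n" "d < n" "e < n" "f < n"
  defines "z \<equiv> cycle3 a b c \<circ> cycle3 d e f"
  shows "\<forall>i. i \<notin> {a, b, c, d, e, f} \<longrightarrow> h z i = i" and "\<forall>p\<in>{a, b, c, d, e, f}. h z p \<in> {p, z p}"
proof -
  have neq: "a \<noteq> b" "a \<noteq> c" "a \<noteq> d" "a \<noteq> e" "a \<noteq> f" "b \<noteq> c" "b \<noteq> d" "b \<noteq> e" "b \<noteq> f"
    "c \<noteq> d" "c \<noteq> e" "c \<noteq> f" "d \<noteq> e" "d \<noteq> f" "e \<noteq> f"
    "b \<noteq> a" "c \<noteq> a" "d \<noteq> a" "e \<noteq> a" "f \<noteq> a" "c \<noteq> b" "d \<noteq> b" "e \<noteq> b" "f \<noteq> b"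
    "d \<noteq> c" "e \<noteq> c" "f \<noteq> c" "e \<noteq> d" "f \<noteq> d" "f \<noteq> e"
    using d by auto
  let ?P = "{a, b, c, d, e, f}"
  let ?W = "[cycle3 a b c, cycle3 d e f]"
  have aut: "cag_aut n h"
    using h unfolding fixes_unit_ball_def by blast
  have z: "z \<in> alt_grp n"
    unfolding z_def using alt_grp_comp cycle3_in_alt_grp neq lt by simp
  have W: "\<forall>w\<in>set ?W. w \<in> alt_grp n \<and> h w = w \<and> (\<forall>i. i \<notin> ?P \<longrightarrow> w i = i) \<and> hamming_dist z w = 3"
    unfolding z_def using fixes_unit_ball_cycle3[OF h] cycle3_in_alt_grp neq lt
      hamming_dist_supported[of ?P _ "cycle3 a b c \<circ> cycle3 d e f"]
    by (auto simp: cycle3_def simp del: sum_of_bool_eq)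
  have low: "\<forall>p\<in>?P. \<forall>v. (1::nat) \<le> (\<Sum>w\<leftarrow>?W. of_bool (v \<noteq> w p))"
    by (auto simp: cycle3_def neq)
  have sum: "(\<Sum>p\<in>?P. 1) = (3::nat) * length ?W"
    using d by simp
  have "finite ?P" "?W \<noteq> []"
    by simp_all
  note pinned = cag_aut_pinned[OF aut z this W low sum]
  show "\<forall>i. i \<notin> ?P \<longrightarrow> h z i = i"
    using pinned(1) .
  show "\<forall>p\<in>?P. h z p \<in> {p, z p}"
  proof
    fix p
    assume p: "p \<in> ?P"
    have "(\<Sum>w\<leftarrow>?W. of_bool (h z p \<noteq> w p)) = (1::nat)"
      using pinned(2) p by (rule bspec)
    then show "h z p \<in> {p, z p}"
      using p by (auto simp: z_def cycle3_def neq of_bool_def split: if_splits)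
  qed
qed

lemma fixes_unit_ball_disjoint_cycle3:
  assumes h: "fixes_unit_ball n h" and d: "distinct [a, b, c, d, e, f]"
    and lt: "a < n" "b < n" "c < n" "d < n" "e < n" "f < n"
  shows "h (cycle3 a b c \<circ> cycle3 d e f) = cycle3 a b c \<circ> cycle3 d e f" (is "h ?z = ?z")
proof -
  have aut: "cag_aut n h"
    using h unfolding fixes_unit_ball_def by blast
  have z: "?z \<in> alt_grp n"
    using alt_grp_comp cycle3_in_alt_grp d lt by simp
  have "inj (h ?z)"
    using alt_grp_bij[THEN bij_is_inj] cag_aut_maps_alt_grp[OF aut z] by blast
  then have "h ?z \<in> {id, cycle3 a b c, cycle3 d e f, ?z}"
    using inj_between_id_and_disjoint_cycle3[OF _ d refl] fixes_unit_ball_disjoint_cycle3_pinned[OF h d lt]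
    by blast
  moreover have "h ?z \<noteq> v" if "v \<in> {id, cycle3 a b c, cycle3 d e f}" for v
  proof
    assume "h ?z = v"
    moreover have "v \<in> alt_grp n" "h v = v"
      using that h id_in_alt_grp cycle3_in_alt_grp fixes_unit_ball_cycle3[OF h] d lt
      unfolding fixes_unit_ball_def by auto
    ultimately have "?z = v"
      using cag_aut_inj[OF aut z] by metis
    moreover have "?z a \<noteq> id a" "?z d \<noteq> cycle3 a b c d" "?z a \<noteq> cycle3 d e f a"
      using d by (auto simp: cycle3_def)
    ultimately show False
      using that by auto
  qed
  ultimately show ?thesis
    by blast
qed

lemma fixes_unit_ball_cycle3_comp_cycle3_common_point:
  assumes h: "fixes_unit_ball n h" and "5 \<le> n" and d1: "distinct [a, b, c]" and d2: "distinct [a, e, f]"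
    and lt: "a < n" "b < n" "c < n" "e < n" "f < n"
  shows "h (cycle3 a b c \<circ> cycle3 a e f) = cycle3 a b c \<circ> cycle3 a e f"
proof -
  have fixed: "h (cycle3 p q r) = cycle3 p q r" if "distinct [p, q, r]" "{p, q, r} \<subseteq> {a, b, c, e, f}" for p q r
    using fixes_unit_ball_cycle3[OF h] that lt by auto
  have fixed2: "h (transpose p q \<circ> transpose r s) = transpose p q \<circ> transpose r s"
    if "distinct [p, q, r, s]" "{p, q, r, s} \<subseteq> {a, b, c, e, f}" for p q r s
    using fixes_unit_ball_double_transposition[OF h \<open>5 \<le> n\<close>] that lt by auto
  consider "e = b" "f = c" | "e = c" "f = b" | "e = b" "f \<noteq> c" | "e = c" "f \<noteq> b"
    | "e \<notin> {b, c}" "f = b" | "e \<notin> {b, c}" "f = c" | "e \<notin> {b, c}" "f \<notin> {b, c}"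
    by blast
  then show ?thesis
  proof cases
    case 1
    then have "cycle3 a b c \<circ> cycle3 a e f = cycle3 a c b"
      using d1 by (auto simp: cycle3_def fun_eq_iff)
    then show ?thesis using fixed[of a c b] d1 by simp
  next
    case 2
    then have "cycle3 a b c \<circ> cycle3 a e f = id"
      using d1 by (auto simp: cycle3_def fun_eq_iff)
    then show ?thesis using h unfolding fixes_unit_ball_def by simp
  next
    case 3
    then have "cycle3 a b c \<circ> cycle3 a e f = transpose a c \<circ> transpose b f"
      using d1 d2 by (auto simp: cycle3_def Transposition.transpose_def fun_eq_iff)
    then show ?thesis using fixed2[of a c b f] 3 d1 d2 by auto
  next
    case 4
    then have "cycle3 a b c \<circ> cycle3 a e f = cycle3 c f b"
      using d1 d2 by (auto simp: cycle3_def fun_eq_iff)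
    then show ?thesis using fixed[of c f b] 4 d1 d2 by auto
  next
    case 5
    then have "cycle3 a b c \<circ> cycle3 a e f = cycle3 a e c"
      using d1 d2 by (auto simp: cycle3_def fun_eq_iff)
    then show ?thesis using fixed[of a e c] 5 d1 d2 by auto
  next
    case 6
    then have "cycle3 a b c \<circ> cycle3 a e f = transpose a e \<circ> transpose b c"
      using d1 d2 by (auto simp: cycle3_def Transposition.transpose_def fun_eq_iff)
    then show ?thesis using fixed2[of a e b c] 6 d1 d2 by auto
  next
    case 7
    then have "cycle3 a b c \<circ> cycle3 a e f = cycle3 a e f \<circ> cycle3 f b c"
      using d1 d2 by (auto simp: cycle3_def fun_eq_iff)
    moreover have "distinct [a, e, f, b, c]"
      using 7 d1 d2 by auto
    ultimately show ?thesis
      using fixes_unit_ball_cycle5[OF h] lt by simp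
  qed
qed

lemma cycle3_rotate_to:
  assumes "distinct [a, b, c]" "s \<in> {a, b, c}"
  obtains y z where "distinct [s, y, z]" "{s, y, z} = {a, b, c}" "cycle3 a b c = cycle3 s y z"
proof -
  have "distinct [b, c, a]" "{b, c, a} = {a, b, c}" "distinct [c, a, b]" "{c, a, b} = {a, b, c}"
    using assms(1) by auto
  moreover have "cycle3 a b c = cycle3 b c a" "cycle3 a b c = cycle3 c a b"
    using cycle3_rotate assms(1) \<open>distinct [b, c, a]\<close> by metis+
  ultimately show thesis
    using that[of b c] that[of c a] that[of a b] assms by auto
qed

lemma fixes_unit_ball_comp_three_cycles:
  assumes h: "fixes_unit_ball n h" and "5 \<le> n" and u: "u \<in> three_cycles n" and t: "t \<in> three_cycles n"
  shows "h (u \<circ> t) = u \<circ> t"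
proof -
  obtain a b c where abc: "distinct [a, b, c]" "a < n" "b < n" "c < n" "u = cycle3 a b c"
    using u by (elim three_cyclesE)
  obtain d e f where def: "distinct [d, e, f]" "d < n" "e < n" "f < n" "t = cycle3 d e f"
    using t by (elim three_cyclesE)
  show ?thesis
  proof (cases "\<exists>s. s \<in> {a, b, c} \<inter> {d, e, f}")
    case True
    then obtain s where s: "s \<in> {a, b, c}" "s \<in> {d, e, f}"
      by blast
    obtain y z where yz: "distinct [s, y, z]" "{s, y, z} = {a, b, c}" "u = cycle3 s y z"
      using cycle3_rotate_to[OF abc(1) s(1)] abc(5) by metis
    obtain y' z' where yz': "distinct [s, y', z']" "{s, y', z'} = {d, e, f}" "t = cycle3 s y' z'"
      using cycle3_rotate_to[OF def(1) s(2)] def(5) by metis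
    have "\<forall>v\<in>{s, y, z} \<union> {s, y', z'}. v < n"
      unfolding yz(2) yz'(2) using abc def by auto
    then have "s < n" "y < n" "z < n" "y' < n" "z' < n"
      by auto
    then show ?thesis
      using fixes_unit_ball_cycle3_comp_cycle3_common_point[OF h \<open>5 \<le> n\<close> yz(1) yz'(1)] yz(3) yz'(3)
      by simp
  next
    case False
    then have "distinct [a, b, c, d, e, f]"
      using abc(1) def(1) by auto
    then show ?thesis
      using fixes_unit_ball_disjoint_cycle3[OF h] abc def by simp
  qed
qed

section \<open>Generation by three-cycles\<close>

inductive_set three_cycle_products :: "nat \<Rightarrow> (nat \<Rightarrow> nat) set" for n where
  idI: "id \<in> three_cycle_products n"
| compI: "\<lbrakk>x \<in> three_cycle_products n; t \<in> three_cycles n\<rbrakk> \<Longrightarrow> t \<circ> x \<in> three_cycle_products n"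

lemma three_cycle_products_subset_alt_grp: "three_cycle_products n \<subseteq> alt_grp n"
proof
  fix x
  assume "x \<in> three_cycle_products n"
  then show "x \<in> alt_grp n"
    by induction (use id_in_alt_grp alt_grp_comp three_cycles_subset_alt_grp in blast)+
qed

lemma cycle3_comp_in_three_cycle_products:
  "\<lbrakk>x \<in> three_cycle_products n; distinct [a, b, c]; a < n; b < n; c < n\<rbrakk>
    \<Longrightarrow> cycle3 a b c \<circ> x \<in> three_cycle_products n"
  using three_cycle_products.compI cycle3_in_three_cycles by blast

lemma transpose_comp_transpose_in_three_cycle_products:
  assumes x: "x \<in> three_cycle_products n" and "a \<noteq> b" "c \<noteq> d" and lt: "a < n" "b < n" "c < n" "d < n"
  shows "transpose c d \<circ> transpose a b \<circ> x \<in> three_cycle_products n"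
proof -
  consider "{c, d} = {a, b}" | "c = a" "d \<noteq> b" | "c = b" "d \<noteq> a" | "d = a" "c \<noteq> b" | "d = b" "c \<noteq> a"
    | "c \<notin> {a, b}" "d \<notin> {a, b}"
    by blast
  then show ?thesis
  proof cases
    case 1
    then have "transpose c d = transpose a b"
      using \<open>a \<noteq> b\<close> by (metis doubleton_eq_iff transpose_commute)
    then show ?thesis
      using x by (simp add: comp_assoc[symmetric])
  next
    case 2
    then have "transpose c d \<circ> transpose a b = cycle3 a b d"
      using \<open>a \<noteq> b\<close> by (auto simp: cycle3_def Transposition.transpose_def fun_eq_iff)
    then show ?thesis
      using cycle3_comp_in_three_cycle_products[OF x, of a b d] 2 \<open>a \<noteq> b\<close> \<open>c \<noteq> d\<close> lt by simp
  next
    case 3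
    then have "transpose c d \<circ> transpose a b = cycle3 b a d"
      using \<open>a \<noteq> b\<close> by (auto simp: cycle3_def Transposition.transpose_def fun_eq_iff)
    then show ?thesis
      using cycle3_comp_in_three_cycle_products[OF x, of b a d] 3 \<open>a \<noteq> b\<close> \<open>c \<noteq> d\<close> lt by simp
  next
    case 4
    then have "transpose c d \<circ> transpose a b = cycle3 a b c"
      using \<open>a \<noteq> b\<close> by (auto simp: cycle3_def Transposition.transpose_def fun_eq_iff)
    then show ?thesis
      using cycle3_comp_in_three_cycle_products[OF x, of a b c] 4 \<open>a \<noteq> b\<close> \<open>c \<noteq> d\<close> lt by simp
  next
    case 5
    then have "transpose c d \<circ> transpose a b = cycle3 b a c"
      using \<open>a \<noteq> b\<close> by (auto simp: cycle3_def Transposition.transpose_def fun_eq_iff)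
    then show ?thesis
      using cycle3_comp_in_three_cycle_products[OF x, of b a c] 5 \<open>a \<noteq> b\<close> \<open>c \<noteq> d\<close> lt by simp
  next
    case 6
    then have "transpose c d \<circ> transpose a b = cycle3 c d a \<circ> cycle3 d a b"
      using \<open>a \<noteq> b\<close> \<open>c \<noteq> d\<close> by (auto simp: cycle3_def Transposition.transpose_def fun_eq_iff)
    moreover have "cycle3 c d a \<circ> (cycle3 d a b \<circ> x) \<in> three_cycle_products n"
      using cycle3_comp_in_three_cycle_products x 6 \<open>a \<noteq> b\<close> \<open>c \<noteq> d\<close> lt by simp
    ultimately show ?thesis
      by (simp add: comp_assoc)
  qed
qed

text \<open>Induction over products of transpositions, carrying along the odd permutations
  as \<open>transpose 0 1 \<circ> p\<close>.\<close>
lemma alt_grp_subset_three_cycle_products: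
  assumes "2 \<le> n"
  shows "alt_grp n \<subseteq> three_cycle_products n"
proof
  fix p
  assume "p \<in> alt_grp n"
  then have "p permutes {..<n}" "evenperm p"
    unfolding alt_grp_def by auto
  have "(evenperm p \<longrightarrow> p \<in> three_cycle_products n) \<and>
    (\<not> evenperm p \<longrightarrow> transpose 0 1 \<circ> p \<in> three_cycle_products n)"
    using \<open>p permutes {..<n}\<close> finite_lessThan[of n]
  proof (induction rule: permutes_induct)
    case id
    then show ?case
      using three_cycle_products.idI by (simp add: id_def)
  next
    case (swap a b p)
    have "permutation p"
      using swap.hyps(4) by (auto simp: permutation_permutes)
    then have parity: "evenperm (transpose a b \<circ> p) \<longleftrightarrow> \<not> evenperm p"
      using evenperm_comp[OF permutation_swap_id, of p a b] evenperm_swap[of a b] swap.hyps(3) by simp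
    have lt: "a < n" "b < n" "0 < n" "1 < n"
      using swap.hyps(1,2) assms by auto
    have even: "transpose 0 1 \<circ> (transpose a b \<circ> p) \<in> three_cycle_products n" if "evenperm p"
    proof -
      have "transpose 0 1 \<circ> transpose a b \<circ> p \<in> three_cycle_products n"
        by (rule transpose_comp_transpose_in_three_cycle_products)
          (use swap.IH swap.hyps(3) that lt in \<open>(blast | simp)+\<close>)
      then show ?thesis
        by (simp only: comp_assoc)
    qed
    have odd: "transpose a b \<circ> p \<in> three_cycle_products n" if "\<not> evenperm p"
    proof -
      have "transpose a b \<circ> transpose 0 1 \<circ> (transpose 0 1 \<circ> p) \<in> three_cycle_products n"
        by (rule transpose_comp_transpose_in_three_cycle_products)
          (use swap.IH swap.hyps(3) that lt in \<open>(blast | simp)+\<close>)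
      moreover have "transpose a b \<circ> transpose 0 1 \<circ> (transpose 0 1 \<circ> p) = transpose a b \<circ> p"
        by (simp add: fun_eq_iff)
      ultimately show ?thesis
        by simp
    qed
    show ?case
      using parity even odd by blast
  qed
  then show "p \<in> three_cycle_products n"
    using \<open>evenperm p\<close> by simp
qed

section \<open>Right translations\<close>

lemma cag_adj_comp_right:
  assumes g: "g \<in> alt_grp n" and "x \<in> alt_grp n" "y \<in> alt_grp n"
  shows "cag_adj n (x \<circ> g) (y \<circ> g) \<longleftrightarrow> cag_adj n x y"
proof -
  have cancel: "u \<circ> g = v \<circ> g \<longleftrightarrow> u = v" for u v :: "nat \<Rightarrow> nat"
    using alt_grp_comp_inv[OF g] by (metis comp_assoc comp_id)
  have "(y \<circ> g = t \<circ> (x \<circ> g) \<or> x \<circ> g = t \<circ> (y \<circ> g)) \<longleftrightarrow> (y = t \<circ> x \<or> x = t \<circ> y)" for t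
    using cancel[of y "t \<circ> x"] cancel[of x "t \<circ> y"] by (simp add: comp_assoc)
  then show ?thesis
    unfolding cag_adj_def using assms alt_grp_comp by auto
qed

lemma bij_betw_comp_right:
  assumes g: "g \<in> alt_grp n"
  shows "bij_betw (\<lambda>x. x \<circ> g) (alt_grp n) (alt_grp n)"
proof (rule bij_betw_byWitness[where f' = "\<lambda>x. x \<circ> inv g"])
  show "\<forall>x\<in>alt_grp n. x \<circ> g \<circ> inv g = x" "\<forall>x\<in>alt_grp n. x \<circ> inv g \<circ> g = x"
    using alt_grp_comp_inv[OF g] alt_grp_inv_comp[OF g] by (simp_all add: comp_assoc)
  show "(\<lambda>x. x \<circ> g) ` alt_grp n \<subseteq> alt_grp n" "(\<lambda>x. x \<circ> inv g) ` alt_grp n \<subseteq> alt_grp n"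
    using alt_grp_comp g alt_grp_inv[OF g] by blast+
qed

lemma cag_aut_conj_right:
  assumes h: "cag_aut n h" and g: "g \<in> alt_grp n"
  shows "cag_aut n (\<lambda>x. h (x \<circ> g) \<circ> inv g)"
proof -
  have "bij_betw ((\<lambda>x. x \<circ> inv g) \<circ> (h \<circ> (\<lambda>x. x \<circ> g))) (alt_grp n) (alt_grp n)"
    using h unfolding cag_aut_def
    by (blast intro: bij_betw_trans bij_betw_comp_right[OF g] bij_betw_comp_right[OF alt_grp_inv[OF g]])
  moreover have "cag_adj n (h (x \<circ> g) \<circ> inv g) (h (y \<circ> g) \<circ> inv g) \<longleftrightarrow> cag_adj n x y"
    if "x \<in> alt_grp n" "y \<in> alt_grp n" for x y
  proof -
    have xy: "x \<circ> g \<in> alt_grp n" "y \<circ> g \<in> alt_grp n"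
      using that g alt_grp_comp by blast+
    then have "cag_adj n (h (x \<circ> g) \<circ> inv g) (h (y \<circ> g) \<circ> inv g) \<longleftrightarrow> cag_adj n (h (x \<circ> g)) (h (y \<circ> g))"
      using cag_adj_comp_right[OF alt_grp_inv[OF g]] cag_aut_maps_alt_grp[OF h] by blast
    also have "\<dots> \<longleftrightarrow> cag_adj n (x \<circ> g) (y \<circ> g)"
      using h xy unfolding cag_aut_def by blast
    also have "\<dots> \<longleftrightarrow> cag_adj n x y"
      using cag_adj_comp_right[OF g that] .
    finally show ?thesis .
  qed
  ultimately show ?thesis
    unfolding cag_aut_def by (simp add: comp_def)
qed

lemma fixes_unit_ball_translate:
  assumes f: "cag_aut n f" and x: "x \<in> alt_grp n"
    and fixed: "f x = x" "\<forall>w\<in>three_cycles n. f (w \<circ> x) = w \<circ> x"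
  shows "fixes_unit_ball n (\<lambda>y. f (y \<circ> x) \<circ> inv x)"
  unfolding fixes_unit_ball_def
  using cag_aut_conj_right[OF f x] fixed alt_grp_comp_inv[OF x] by (simp add: comp_assoc)

lemma fixes_unit_ball_fixes_three_cycle_products:
  assumes f: "fixes_unit_ball n f" and "5 \<le> n" and "x \<in> three_cycle_products n"
  shows "f x = x \<and> (\<forall>w\<in>three_cycles n. f (w \<circ> x) = w \<circ> x)"
  using \<open>x \<in> three_cycle_products n\<close>
proof induction
  case idI
  then show ?case
    using f unfolding fixes_unit_ball_def by (simp add: id_def[symmetric])
next
  case (compI x t)
  have x: "x \<in> alt_grp n"
    using compI.hyps(1) three_cycle_products_subset_alt_grp by blast
  have ball: "fixes_unit_ball n (\<lambda>y. f (y \<circ> x) \<circ> inv x)"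
    using fixes_unit_ball_translate[OF _ x] compI.IH f unfolding fixes_unit_ball_def by blast
  have "f (w \<circ> (t \<circ> x)) = w \<circ> (t \<circ> x)" if "w \<in> three_cycles n" for w
  proof -
    have "f (w \<circ> t \<circ> x) \<circ> inv x = w \<circ> t"
      using fixes_unit_ball_comp_three_cycles[OF ball \<open>5 \<le> n\<close> that compI.hyps(2)] .
    then have "f (w \<circ> t \<circ> x) \<circ> inv x \<circ> x = w \<circ> t \<circ> x"
      by simp
    then show ?thesis
      using alt_grp_inv_comp[OF x] by (simp add: comp_assoc)
  qed
  then show ?case
    using compI.IH compI.hyps(2) by blast
qed

theorem lemma3p2:
  fixes n :: nat and f :: "(nat \<Rightarrow> nat) \<Rightarrow> (nat \<Rightarrow> nat)"
  assumes "n \<ge> 5"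
    and "cag_aut n f"
    and "f id = id"
    and "\<forall>v. cag_adj n id v \<longrightarrow> f v = v"
  shows "\<forall>x\<in>alt_grp n. f x = x"
proof -
  have "fixes_unit_ball n f"
    using assms(2-4) cag_adj_id_three_cycle unfolding fixes_unit_ball_def by blast
  moreover have "alt_grp n \<subseteq> three_cycle_products n"
    using alt_grp_subset_three_cycle_products \<open>n \<ge> 5\<close> by simp
  ultimately show ?thesis
    using fixes_unit_ball_fixes_three_cycle_products \<open>n \<ge> 5\<close> by blast
qed

end
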